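(* Let $G$ be a discriminating group and let $S\subset F$ be a set of weak identities in $G$. Then every element $s\in S$ is an identity in $G$, i.e. $\pi(s)=1$ for every homomorphism $\pi:F\to G$.
   Context: A group $G$ is discriminating if for every integer $N$ and every $h_1,\dots,h_N\in G\times G$ there is a homomorphism $\rho:G\times G\to G$ with $\rho(h_i)=1$ if and only if $h_i=1$, for each $i$. Let $F$ be the free group on countably many generators $g_1,g_2,\dots$. For $N\ge 1$, $F^{\times N}$ is the direct product of $N$ copies of $F$, $i_k:F\to F^{\times N}$ the $k$-th inclusion. A subset $S\subset F$ is a set of weak identities in $G$ if there exists $N\ge1$ such that for any $s_1,\dots,s_N\in S$ and any homomorphism $\rho:F^{\times N}\to G$ some $k$ has $\rho(i_k(s_k))=1$. *)

theory Defs
  imports "HOL-Algebra.Algebra"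
begin

text \<open>The free group F on countably many generators g_0, g_1, ... (indexed by nat),
realised as the group of freely reduced words.  A letter (True, n) stands for g_n,
(False, n) for its inverse.\<close>

type_synonym letter = "bool \<times> nat"
type_synonym word = "letter list"

definition inv_letter :: "letter \<Rightarrow> letter" where
  "inv_letter a = (\<not> fst a, snd a)"

fun cons_red :: "letter \<Rightarrow> word \<Rightarrow> word" where
  "cons_red a [] = [a]"
| "cons_red a (b # w) = (if b = inv_letter a then w else a # b # w)"

definition reduce :: "word \<Rightarrow> word" where
  "reduce w = foldr cons_red w []"

definition reduced :: "word \<Rightarrow> bool" where
  "reduced w \<longleftrightarrow> (\<forall>i. Suc i < length w \<longrightarrow> w ! Suc i \<noteq> inv_letter (w ! i))"

definition free_group_nat :: "word monoid" where
  "free_group_nat = \<lparr> carrier = {w. reduced w},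
                      monoid.mult = (\<lambda>x y. reduce (x @ y)),
                      one = [] \<rparr>"

definition free_power :: "nat \<Rightarrow> (nat \<Rightarrow> word) monoid" where
  "free_power N = product_group {..<N} (\<lambda>_. free_group_nat)"

definition incl :: "nat \<Rightarrow> nat \<Rightarrow> word \<Rightarrow> (nat \<Rightarrow> word)" where
  "incl N k x = (\<lambda>i\<in>{..<N}. if i = k then x else \<one>\<^bsub>free_group_nat\<^esub>)"

definition discriminating :: "('a, 'b) monoid_scheme \<Rightarrow> bool" where
  "discriminating G \<longleftrightarrow>
     (\<forall>(N::nat) (h :: nat \<Rightarrow> 'a \<times> 'a). (\<forall>i<N. h i \<in> carrier (G \<times>\<times> G)) \<longrightarrow>
        (\<exists>\<rho> \<in> hom (G \<times>\<times> G) G. \<forall>i<N. (\<rho> (h i) = \<one>\<^bsub>G\<^esub> \<longleftrightarrow> h i = \<one>\<^bsub>G \<times>\<times> G\<^esub>)))"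

definition weak_identities :: "word set \<Rightarrow> ('a, 'b) monoid_scheme \<Rightarrow> bool" where
  "weak_identities S G \<longleftrightarrow> S \<subseteq> carrier free_group_nat \<and>
     (\<exists>N::nat. N \<ge> 1 \<and>
        (\<forall>s :: nat \<Rightarrow> word. (\<forall>k<N. s k \<in> S) \<longrightarrow>
           (\<forall>\<rho> \<in> hom (free_power N) G. \<exists>k<N. \<rho> (incl N k (s k)) = \<one>\<^bsub>G\<^esub>)))"

definition is_identity :: "word \<Rightarrow> ('a, 'b) monoid_scheme \<Rightarrow> bool" where
  "is_identity s G \<longleftrightarrow> (\<forall>\<pi> \<in> hom free_group_nat G. \<pi> s = \<one>\<^bsub>G\<^esub>)"

end

theory Submission
  imports Defs
begin

text \<open>If some homomorphism p : F \<rightarrow> G does not kill s, then every i_k(s) in F^N is detected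
by p composed with the k-th projection.  A discriminating group merges two homomorphisms
\<alpha>, \<beta> : H \<rightarrow> G into \<rho> \<circ> (\<alpha>, \<beta>) without losing any of finitely many prescribed non-trivial
values, so by induction a single homomorphism F^N \<rightarrow> G is non-trivial on all i_k(s)
simultaneously, contradicting that S is a set of weak identities.\<close>

lemma const_one_hom:
  assumes "monoid H"
  shows "(\<lambda>_. \<one>\<^bsub>H\<^esub>) \<in> hom G H"
  using assms by (simp add: hom_def monoid.one_closed)

lemma product_group_proj_hom:
  assumes "i \<in> I"
  shows "(\<lambda>x. x i) \<in> hom (product_group I G) (G i)"
  using assms by (auto simp: hom_def)

lemma incl_in_free_power:
  assumes "s \<in> carrier free_group_nat"
  shows "incl N k s \<in> carrier (free_power N)"
  using assms by (auto simp: incl_def free_power_def free_group_nat_def reduced_def)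

lemma free_power_proj_hom:
  assumes "k < N"
  shows "(\<lambda>x. x k) \<in> hom (free_power N) free_group_nat"
  using product_group_proj_hom[of k "{..<N}" "\<lambda>_. free_group_nat"] assms
  by (simp add: free_power_def)

lemma incl_detected_by_proj:
  assumes "p \<in> hom free_group_nat G" and "p s \<noteq> \<one>\<^bsub>G\<^esub>" and "k < N"
  shows "\<exists>\<phi> \<in> hom (free_power N) G. \<phi> (incl N k s) \<noteq> \<one>\<^bsub>G\<^esub>"
proof
  show "p \<circ> (\<lambda>x. x k) \<in> hom (free_power N) G"
    using hom_compose[OF free_power_proj_hom[OF assms(3)] assms(1)] .
  show "(p \<circ> (\<lambda>x. x k)) (incl N k s) \<noteq> \<one>\<^bsub>G\<^esub>"
    using assms(2,3) by (simp add: incl_def)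
qed

lemma discriminating_combine_homs:
  fixes n :: nat
  assumes disc: "discriminating G"
    and hom: "\<alpha> \<in> hom H G" "\<beta> \<in> hom H G"
    and x: "\<forall>i<n. x i \<in> carrier H"
    and detected: "\<forall>i<n. \<alpha> (x i) \<noteq> \<one>\<^bsub>G\<^esub> \<or> \<beta> (x i) \<noteq> \<one>\<^bsub>G\<^esub>"
  shows "\<exists>\<gamma> \<in> hom H G. \<forall>i<n. \<gamma> (x i) \<noteq> \<one>\<^bsub>G\<^esub>"
proof -
  let ?pair = "\<lambda>y. (\<alpha> y, \<beta> y)"
  have "\<forall>i<n. ?pair (x i) \<in> carrier (G \<times>\<times> G)"
    using hom x by (simp add: hom_in_carrier)
  then obtain \<rho> where \<rho>: "\<rho> \<in> hom (G \<times>\<times> G) G"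
    and sep: "\<forall>i<n. \<rho> (?pair (x i)) = \<one>\<^bsub>G\<^esub> \<longleftrightarrow> ?pair (x i) = \<one>\<^bsub>G \<times>\<times> G\<^esub>"
    using disc[unfolded discriminating_def, rule_format, of n "\<lambda>i. ?pair (x i)"] by blast
  have "\<rho> \<circ> ?pair \<in> hom H G"
    using hom \<rho> by (intro hom_compose[where H = "G \<times>\<times> G"]) (simp_all add: hom_paired)
  moreover have "\<forall>i<n. (\<rho> \<circ> ?pair) (x i) \<noteq> \<one>\<^bsub>G\<^esub>"
    using sep detected by auto
  ultimately show ?thesis by blast
qed

lemma discriminating_separates_finite:
  fixes n :: nat
  assumes "group G" and "discriminating G"
    and "\<forall>i<n. x i \<in> carrier H \<and> (\<exists>\<phi> \<in> hom H G. \<phi> (x i) \<noteq> \<one>\<^bsub>G\<^esub>)"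
  shows "\<exists>\<psi> \<in> hom H G. \<forall>i<n. \<psi> (x i) \<noteq> \<one>\<^bsub>G\<^esub>"
  using assms(3)
proof (induction n)
  case 0
  show ?case using const_one_hom group.is_monoid[OF assms(1)] by blast
next
  case (Suc n)
  then obtain \<alpha> where \<alpha>: "\<alpha> \<in> hom H G" "\<forall>i<n. \<alpha> (x i) \<noteq> \<one>\<^bsub>G\<^esub>"
    by auto
  obtain \<beta> where \<beta>: "\<beta> \<in> hom H G" "\<beta> (x n) \<noteq> \<one>\<^bsub>G\<^esub>"
    using Suc.prems by blast
  have "\<forall>i<Suc n. \<alpha> (x i) \<noteq> \<one>\<^bsub>G\<^esub> \<or> \<beta> (x i) \<noteq> \<one>\<^bsub>G\<^esub>"
    using \<alpha>(2) \<beta>(2) less_Suc_eq by auto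
  then show ?case
    using discriminating_combine_homs[OF assms(2) \<alpha>(1) \<beta>(1)] Suc.prems by blast
qed

theorem theorem6p3:
  fixes G :: "('a, 'b) monoid_scheme" and S :: "word set"
  assumes "group G"
    and "discriminating G"
    and "weak_identities S G"
  shows "\<forall>s \<in> S. is_identity s G"
proof
  fix s assume s: "s \<in> S"
  obtain N where S_carrier: "S \<subseteq> carrier free_group_nat"
    and weak: "\<forall>s :: nat \<Rightarrow> word. (\<forall>k<N. s k \<in> S) \<longrightarrow>
                 (\<forall>\<rho> \<in> hom (free_power N) G. \<exists>k<N. \<rho> (incl N k (s k)) = \<one>\<^bsub>G\<^esub>)"
    using assms(3) unfolding weak_identities_def by blast
  show "is_identity s G" unfolding is_identity_def
  proof (rule ccontr)
    assume "\<not> (\<forall>\<pi> \<in> hom free_group_nat G. \<pi> s = \<one>\<^bsub>G\<^esub>)"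
    then obtain p where p: "p \<in> hom free_group_nat G" "p s \<noteq> \<one>\<^bsub>G\<^esub>" by blast
    have "\<forall>k<N. incl N k s \<in> carrier (free_power N)
        \<and> (\<exists>\<phi> \<in> hom (free_power N) G. \<phi> (incl N k s) \<noteq> \<one>\<^bsub>G\<^esub>)"
      using incl_in_free_power[OF subsetD[OF S_carrier s]] incl_detected_by_proj[OF p] by blast
    then obtain \<psi> where "\<psi> \<in> hom (free_power N) G" "\<forall>k<N. \<psi> (incl N k s) \<noteq> \<one>\<^bsub>G\<^esub>"
      using discriminating_separates_finite[OF assms(1,2), of N "\<lambda>k. incl N k s"]
      by blast
    then show False
      using weak[rule_format, of "\<lambda>_. s"] s by blast
  qed
qed

end
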